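(* The principle $(\star_s)$ implies that every Aronszajn tree is $(\mathcal{NS}^+,\mathcal{NS}^* )$-special.
   Context: $[\theta]^{\le\aleph_0}$: countable subsets of $\theta$; $x\subseteq^*y$ iff $x\setminus y$ finite; $\downarrow\mathcal H=\bigcup_{x\in\mathcal H}\mathcal P(x)$; a set is locally in $\mathcal K$ if all its countable subsets are in $\mathcal K$; $B$ is orthogonal to $\mathcal H$ if $B\cap x$ is finite for all $x\in\mathcal H$; $\sigma$-directed means every countable subset has an upper bound in the family. $(\star_s)$: for every ordinal $\theta$ of uncountable cofinality there is a maximal antichain $\mathcal A$ of the partial order (stationary subsets of $\theta$, $\subseteq$) such that for every $\sigma$-directed subfamily $\mathcal H$ of $([\theta]^{\le\aleph_0},\subseteq^* )$, either (1) every $S\in\mathcal A$ has an uncountable $C\subseteq S$, relatively closed in $S$, locally in $\downarrow\mathcal H$, or (2) there is a stationary subset of $\theta$ orthogonal to $\mathcal H$. For a tree $T$ of height $\omega_1$ with $\alpha$-th level $T_\alpha$ and $C\subseteq\omega_1$, $T\restriction C=\bigcup_{\alpha\in C}T_\alpha$. A tree is special if it is a countable union of antichains. An $\omega_1$-tree $T$ is $(\mathcal{NS}^+,\mathcal{NS}^* )$-special if there is a maximal antichain $\mathcal A$ of (stationary subsets of $\omega_1$, $\subseteq$) such that every $S\in\mathcal A$ has a relatively closed $C\subseteq S$ for which $T\restriction C$ is special. An Aronszajn tree is an $\omega_1$-tree (height $\omega_1$, countable levels) with no uncountable branch. *)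

theory Defs
  imports Main "HOL-Library.Countable_Set"
begin

text \<open>An ordinal theta is represented by a well-order r (non-strict, as a set of pairs);
  the elements of theta (the ordinals below theta) are the elements of Field r.\<close>

definition least_upper_bound :: "'x rel \<Rightarrow> 'x set \<Rightarrow> 'x \<Rightarrow> bool" where
  "least_upper_bound r X a \<longleftrightarrow> a \<in> Field r \<and> (\<forall>x\<in>X. (x, a) \<in> r) \<and>
     (\<forall>b\<in>Field r. (\<forall>x\<in>X. (x, b) \<in> r) \<longrightarrow> (a, b) \<in> r)"

definition uncountable_cof :: "'x rel \<Rightarrow> bool" where
  "uncountable_cof r \<longleftrightarrow>
     (\<forall>X. X \<subseteq> Field r \<and> countable X \<longrightarrow> (\<exists>b\<in>Field r. \<forall>x\<in>X. (x, b) \<in> r \<and> x \<noteq> b))"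

definition unbounded :: "'x rel \<Rightarrow> 'x set \<Rightarrow> bool" where
  "unbounded r C \<longleftrightarrow> (\<forall>a\<in>Field r. \<exists>b\<in>C. (a, b) \<in> r)"

definition rel_closed :: "'x rel \<Rightarrow> 'x set \<Rightarrow> 'x set \<Rightarrow> bool" where
  "rel_closed r S C \<longleftrightarrow> C \<subseteq> S \<and>
     (\<forall>X a. X \<subseteq> C \<and> X \<noteq> {} \<and> a \<in> S \<and> least_upper_bound r X a \<longrightarrow> a \<in> C)"

definition club :: "'x rel \<Rightarrow> 'x set \<Rightarrow> bool" where
  "club r C \<longleftrightarrow> rel_closed r (Field r) C \<and> unbounded r C"

definition stationary :: "'x rel \<Rightarrow> 'x set \<Rightarrow> bool" where
  "stationary r S \<longleftrightarrow> S \<subseteq> Field r \<and> (\<forall>C. club r C \<longrightarrow> S \<inter> C \<noteq> {})"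

text \<open>Maximal antichain in the partial order (stationary subsets, subset): members are
  stationary, distinct members are incompatible (no stationary common lower bound,
  i.e. their intersection is nonstationary), and every stationary set is compatible
  with some member.\<close>
definition max_antichain_stat :: "'x rel \<Rightarrow> 'x set set \<Rightarrow> bool" where
  "max_antichain_stat r \<A> \<longleftrightarrow>
     (\<forall>S\<in>\<A>. stationary r S) \<and>
     (\<forall>S\<in>\<A>. \<forall>S'\<in>\<A>. S \<noteq> S' \<longrightarrow> \<not> stationary r (S \<inter> S')) \<and>
     (\<forall>B. stationary r B \<longrightarrow> (\<exists>S\<in>\<A>. stationary r (S \<inter> B)))"

definition almost_subset :: "'x set \<Rightarrow> 'x set \<Rightarrow> bool" where
  "almost_subset x y \<longleftrightarrow> finite (x - y)"

definition sigma_directed :: "'x rel \<Rightarrow> 'x set set \<Rightarrow> bool" where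
  "sigma_directed r \<H> \<longleftrightarrow>
     (\<forall>x\<in>\<H>. x \<subseteq> Field r \<and> countable x) \<and>
     (\<forall>\<G>. \<G> \<subseteq> \<H> \<and> countable \<G> \<longrightarrow> (\<exists>y\<in>\<H>. \<forall>x\<in>\<G>. almost_subset x y))"

definition down :: "'x set set \<Rightarrow> 'x set set" where
  "down \<H> = (\<Union>x\<in>\<H>. Pow x)"

definition locally_in :: "'x set set \<Rightarrow> 'x set \<Rightarrow> bool" where
  "locally_in \<K> C \<longleftrightarrow> (\<forall>Y. Y \<subseteq> C \<and> countable Y \<longrightarrow> Y \<in> \<K>)"

definition orthogonal :: "'x set \<Rightarrow> 'x set set \<Rightarrow> bool" where
  "orthogonal B \<H> \<longleftrightarrow> (\<forall>x\<in>\<H>. finite (B \<inter> x))"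

text \<open>(star_s) restricted to ordinals represented by well-orders on the type 'x.\<close>
definition star_s :: "'x itself \<Rightarrow> bool" where
  "star_s (_ :: 'x itself) \<longleftrightarrow>
     (\<forall>r :: 'x rel. Well_order r \<and> uncountable_cof r \<longrightarrow>
       (\<exists>\<A>. max_antichain_stat r \<A> \<and>
          (\<forall>\<H>. sigma_directed r \<H> \<longrightarrow>
             (\<forall>S\<in>\<A>. \<exists>C. C \<subseteq> S \<and> uncountable C \<and> rel_closed r S C \<and> locally_in (down \<H>) C)
             \<or> (\<exists>B. stationary r B \<and> orthogonal B \<H>))))"

text \<open>w is (a copy of) omega_1: an uncountable well-order all of whose proper initial
  segments are countable.\<close>
definition is_omega1 :: "'i rel \<Rightarrow> bool" where
  "is_omega1 w \<longleftrightarrow> Well_order w \<and> uncountable (Field w) \<and>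
     (\<forall>\<alpha>\<in>Field w. countable (underS w \<alpha>))"

definition is_tree :: "'a set \<Rightarrow> ('a \<Rightarrow> 'a \<Rightarrow> bool) \<Rightarrow> bool" where
  "is_tree T lt \<longleftrightarrow>
     (\<forall>x\<in>T. \<not> lt x x) \<and>
     (\<forall>x\<in>T. \<forall>y\<in>T. \<forall>z\<in>T. lt x y \<and> lt y z \<longrightarrow> lt x z) \<and>
     (\<forall>t\<in>T. (\<forall>x\<in>T. \<forall>y\<in>T. lt x t \<and> lt y t \<longrightarrow> lt x y \<or> x = y \<or> lt y x) \<and>
             (\<forall>X. X \<subseteq> {s\<in>T. lt s t} \<and> X \<noteq> {} \<longrightarrow> (\<exists>m\<in>X. \<forall>x\<in>X. \<not> lt x m)))"

definition level :: "'i rel \<Rightarrow> 'a set \<Rightarrow> ('a \<Rightarrow> 'a \<Rightarrow> bool) \<Rightarrow> 'i \<Rightarrow> 'a set" where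
  "level w T lt \<alpha> = {t\<in>T. \<exists>f. bij_betw f {s\<in>T. lt s t} (underS w \<alpha>) \<and>
      (\<forall>x\<in>{s\<in>T. lt s t}. \<forall>y\<in>{s\<in>T. lt s t}. lt x y \<longleftrightarrow> (f x, f y) \<in> w \<and> f x \<noteq> f y)}"

definition omega1_tree :: "'i rel \<Rightarrow> 'a set \<Rightarrow> ('a \<Rightarrow> 'a \<Rightarrow> bool) \<Rightarrow> bool" where
  "omega1_tree w T lt \<longleftrightarrow> is_tree T lt \<and> T = (\<Union>\<alpha>\<in>Field w. level w T lt \<alpha>) \<and>
     (\<forall>\<alpha>\<in>Field w. level w T lt \<alpha> \<noteq> {} \<and> countable (level w T lt \<alpha>))"

definition branch :: "'a set \<Rightarrow> ('a \<Rightarrow> 'a \<Rightarrow> bool) \<Rightarrow> 'a set \<Rightarrow> bool" where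
  "branch T lt B \<longleftrightarrow> B \<subseteq> T \<and> (\<forall>x\<in>B. \<forall>y\<in>B. lt x y \<or> x = y \<or> lt y x) \<and>
     (\<forall>x\<in>B. \<forall>s\<in>T. lt s x \<longrightarrow> s \<in> B)"

definition aronszajn :: "'i rel \<Rightarrow> 'a set \<Rightarrow> ('a \<Rightarrow> 'a \<Rightarrow> bool) \<Rightarrow> bool" where
  "aronszajn w T lt \<longleftrightarrow> omega1_tree w T lt \<and> (\<forall>B. branch T lt B \<longrightarrow> countable B)"

definition restr :: "'i rel \<Rightarrow> 'a set \<Rightarrow> ('a \<Rightarrow> 'a \<Rightarrow> bool) \<Rightarrow> 'i set \<Rightarrow> 'a set" where
  "restr w T lt C = (\<Union>\<alpha>\<in>C. level w T lt \<alpha>)"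

definition antichain :: "('a \<Rightarrow> 'a \<Rightarrow> bool) \<Rightarrow> 'a set \<Rightarrow> bool" where
  "antichain lt A \<longleftrightarrow> (\<forall>x\<in>A. \<forall>y\<in>A. x \<noteq> y \<longrightarrow> \<not> lt x y \<and> \<not> lt y x)"

definition special :: "('a \<Rightarrow> 'a \<Rightarrow> bool) \<Rightarrow> 'a set \<Rightarrow> bool" where
  "special lt X \<longleftrightarrow> (\<exists>\<F>. countable \<F> \<and> (\<forall>A\<in>\<F>. antichain lt A) \<and> X = \<Union>\<F>)"

text \<open>(NS+, NS*)-special; the relatively closed sets C are required to be uncountable
  (i.e. unbounded in omega_1).\<close>
definition NS_special :: "'i rel \<Rightarrow> 'a set \<Rightarrow> ('a \<Rightarrow> 'a \<Rightarrow> bool) \<Rightarrow> bool" where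
  "NS_special w T lt \<longleftrightarrow> (\<exists>\<A>. max_antichain_stat w \<A> \<and>
     (\<forall>S\<in>\<A>. \<exists>C. C \<subseteq> S \<and> uncountable C \<and> rel_closed w S C \<and> special lt (restr w T lt C)))"

end

theory Submission
  imports Defs
begin

text \<open>Fix a selector u picking one node u \<alpha> on each level \<alpha> of the Aronszajn tree, and call a set
  of levels thin if every node lies above only finitely many of the chosen nodes. The countable
  thin sets form a \<sigma>-directed family, and no stationary set is orthogonal to it: by the
  Aronszajn property every uncountable set of levels contains an infinite set on which u is an
  antichain. So (\<star>s) provides, for each member S of its antichain, a relatively closed
  uncountable C \<subseteq> S locally in the thin sets, i.e. thin itself, and u ` C is special (rank each
  node by its finitely many predecessors in u ` C). Countably many selectors exhaust the
  countable levels, and since countably many uncountable relatively closed subsets of a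
  stationary set have uncountable intersection, one C works for all of them at once.\<close>

lemma uncountable_fiber:
  assumes "f ` A \<subseteq> L" "countable L" "uncountable A"
  shows "\<exists>y\<in>L. uncountable {a\<in>A. f a = y}"
proof (rule ccontr)
  assume "\<not> ?thesis"
  then have "countable (\<Union>y\<in>L. {a\<in>A. f a = y})" using assms(2) by blast
  moreover have "A \<subseteq> (\<Union>y\<in>L. {a\<in>A. f a = y})" using assms(1) by blast
  ultimately show False using assms(3) countable_subset by blast
qed

text \<open>Remove from the k-th set its finitely many points caught by the first k tests.\<close>
lemma diagonal_almost_upper_bound_nat:
  fixes g :: "nat \<Rightarrow> 'i set" and e :: "nat \<Rightarrow> 'b"
  assumes fin: "\<And>k j. finite {\<alpha>\<in>g k. R \<alpha> (e j)}"
  shows "\<exists>y\<subseteq>(\<Union>k. g k). (\<forall>k. finite (g k - y)) \<and> (\<forall>j. finite {\<alpha>\<in>y. R \<alpha> (e j)})"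
proof -
  define F where "F k = (\<Union>j<k. {\<alpha>\<in>g k. R \<alpha> (e j)})" for k
  define y where "y = (\<Union>k. g k - F k)"
  have "finite (g k - y)" for k
  proof -
    have "g k - y \<subseteq> F k" unfolding y_def by blast
    moreover have "finite (F k)" unfolding F_def using fin by blast
    ultimately show ?thesis by (rule finite_subset)
  qed
  moreover have "finite {\<alpha>\<in>y. R \<alpha> (e j)}" for j
  proof -
    have "{\<alpha>\<in>y. R \<alpha> (e j)} \<subseteq> (\<Union>k\<le>j. {\<alpha>\<in>g k. R \<alpha> (e j)})"
    proof
      fix \<alpha> assume \<alpha>: "\<alpha> \<in> {\<alpha>\<in>y. R \<alpha> (e j)}"
      then obtain k where k: "\<alpha> \<in> g k" "\<alpha> \<notin> F k" unfolding y_def by blast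
      then have "k \<le> j" using \<alpha> unfolding F_def by (auto simp: not_le)
      then show "\<alpha> \<in> (\<Union>k\<le>j. {\<alpha>\<in>g k. R \<alpha> (e j)})" using k \<alpha> by blast
    qed
    then show ?thesis by (rule finite_subset) (simp add: fin)
  qed
  moreover have "y \<subseteq> (\<Union>k. g k)" unfolding y_def by blast
  ultimately show ?thesis by blast
qed

lemma diagonal_almost_upper_bound:
  assumes "countable G" "countable L" "\<forall>x\<in>G. \<forall>t\<in>L. finite {\<alpha>\<in>x. R \<alpha> t}"
  shows "\<exists>y\<subseteq>\<Union>G. (\<forall>x\<in>G. finite (x - y)) \<and> (\<forall>t\<in>L. finite {\<alpha>\<in>y. R \<alpha> t})"
proof (cases "G = {} \<or> L = {}")
  case True
  have "finite (x - \<Union>G)" if "x \<in> G" for x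
    using that by (metis Diff_eq_empty_iff Union_upper finite.emptyI)
  with True show ?thesis by (intro exI[of _ "\<Union>G"]) auto
next
  case False
  define g where "g = from_nat_into G"
  define e where "e = from_nat_into L"
  have g: "range g = G" and e: "range e = L"
    unfolding g_def e_def using False assms(1,2) by (auto intro: range_from_nat_into)
  have "\<exists>y\<subseteq>(\<Union>k. g k). (\<forall>k. finite (g k - y)) \<and> (\<forall>j. finite {\<alpha>\<in>y. R \<alpha> (e j)})"
    using assms(3) g e by (intro diagonal_almost_upper_bound_nat) blast
  then show ?thesis using g e by auto
qed

lemma rel_closed_INT:
  assumes "\<And>n::nat. rel_closed r S (C n)"
  shows "rel_closed r S (\<Inter>n. C n)"
  unfolding rel_closed_def
proof (intro conjI allI impI)
  show "(\<Inter>n. C n) \<subseteq> S" using assms unfolding rel_closed_def by blast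
next
  fix X a assume "X \<subseteq> (\<Inter>n. C n) \<and> X \<noteq> {} \<and> a \<in> S \<and> least_upper_bound r X a"
  then show "a \<in> (\<Inter>n. C n)" using assms unfolding rel_closed_def by (meson INT_I le_INF_iff)
qed

lemma special_UN:
  assumes "\<And>n::nat. special lt (X n)"
  shows "special lt (\<Union>n. X n)"
proof -
  obtain F where F: "\<And>n. countable (F n)" "\<And>n. \<forall>A\<in>F n. antichain lt A" "\<And>n. X n = \<Union>(F n)"
    using assms unfolding special_def by metis
  have "countable (\<Union>n. F n)" "\<forall>A\<in>(\<Union>n. F n). antichain lt A" "(\<Union>n. X n) = \<Union>(\<Union>n. F n)"
    using F by auto
  then show ?thesis unfolding special_def by (intro exI[of _ "\<Union>n. F n"]) blast
qed

locale omega1 =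
  fixes w :: "'i rel"
  assumes is_omega1: "is_omega1 w"
begin

abbreviation w_less :: "'i \<Rightarrow> 'i \<Rightarrow> bool" where
  "w_less a b \<equiv> (a, b) \<in> w \<and> a \<noteq> b"

lemma well_order: "Well_order w"
  using is_omega1 by (simp add: is_omega1_def)

lemma uncountable_Field: "uncountable (Field w)"
  using is_omega1 by (simp add: is_omega1_def)

lemma countable_underS: "\<alpha> \<in> Field w \<Longrightarrow> countable (underS w \<alpha>)"
  using is_omega1 by (simp add: is_omega1_def)

lemma wf_w: "wf (w - Id)"
  using well_order by (simp add: well_order_on_def)

lemma w_trans: "(a, b) \<in> w \<Longrightarrow> (b, c) \<in> w \<Longrightarrow> (a, c) \<in> w"
  using well_order by (meson order_on_defs transD)

lemma w_antisym: "(a, b) \<in> w \<Longrightarrow> (b, a) \<in> w \<Longrightarrow> a = b"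
  using well_order by (meson order_on_defs antisymD)

lemma w_refl: "a \<in> Field w \<Longrightarrow> (a, a) \<in> w"
  using well_order by (meson order_on_defs refl_onD)

lemma w_total: "a \<in> Field w \<Longrightarrow> b \<in> Field w \<Longrightarrow> (a, b) \<in> w \<or> (b, a) \<in> w"
proof -
  have "total_on (Field w) w" using well_order by (simp add: order_on_defs)
  then show "a \<in> Field w \<Longrightarrow> b \<in> Field w \<Longrightarrow> (a, b) \<in> w \<or> (b, a) \<in> w"
    using w_refl by (metis total_on_def)
qed

lemma w_less_le_trans: "w_less a b \<Longrightarrow> (b, c) \<in> w \<Longrightarrow> w_less a c"
  by (metis w_antisym w_trans)

lemma underS_subset_Field: "underS w \<alpha> \<subseteq> Field w"
  by (auto simp: underS_def intro: FieldI1)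

lemma countable_strict_upper_bound:
  assumes "X \<subseteq> Field w" "countable X"
  shows "\<exists>b\<in>Field w. \<forall>x\<in>X. w_less x b"
proof -
  have "countable (X \<union> (\<Union>x\<in>X. underS w x))" using assms countable_underS by auto
  then have "\<not> Field w \<subseteq> X \<union> (\<Union>x\<in>X. underS w x)"
    using uncountable_Field countable_subset by blast
  then obtain b where b: "b \<in> Field w" "b \<notin> X \<union> (\<Union>x\<in>X. underS w x)" by blast
  have "w_less x b" if x: "x \<in> X" for x
  proof -
    have "b \<notin> underS w x" "b \<noteq> x" using b x by auto
    then show ?thesis using w_total[of x b] x assms(1) b(1) by (auto simp: underS_def)
  qed
  then show ?thesis using b by blast
qed

lemma uncountable_cof: "uncountable_cof w"
  unfolding uncountable_cof_def using countable_strict_upper_bound by blast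

lemma uncountable_above:
  assumes "uncountable U" "U \<subseteq> Field w" "\<beta> \<in> Field w"
  shows "uncountable {\<alpha>\<in>U. w_less \<beta> \<alpha>}"
proof
  assume "countable {\<alpha>\<in>U. w_less \<beta> \<alpha>}"
  then have "countable ({\<alpha>\<in>U. w_less \<beta> \<alpha>} \<union> underS w \<beta> \<union> {\<beta>})"
    using countable_underS[OF assms(3)] by simp
  moreover have "U \<subseteq> {\<alpha>\<in>U. w_less \<beta> \<alpha>} \<union> underS w \<beta> \<union> {\<beta>}"
    using w_total[of _ \<beta>] assms by (auto simp: underS_def)
  ultimately show False using assms(1) countable_subset by blast
qed

lemma uncountable_if_unbounded:
  assumes "U \<subseteq> Field w" "\<forall>\<beta>\<in>Field w. \<exists>\<alpha>\<in>U. w_less \<beta> \<alpha>"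
  shows "uncountable U"
proof
  assume "countable U"
  then obtain b where b: "b \<in> Field w" "\<forall>x\<in>U. w_less x b"
    using countable_strict_upper_bound assms(1) by blast
  then obtain \<alpha> where "\<alpha> \<in> U" "w_less b \<alpha>" using assms(2) by blast
  then show False using b(2) w_antisym by blast
qed

lemma countable_has_lub:
  assumes "X \<subseteq> Field w" "countable X"
  obtains a where "least_upper_bound w X a"
proof -
  let ?U = "{b\<in>Field w. \<forall>x\<in>X. (x, b) \<in> w}"
  obtain b where "b \<in> Field w" "\<forall>x\<in>X. w_less x b"
    using countable_strict_upper_bound[OF assms] by blast
  then have "b \<in> ?U" by blast
  then obtain m where m: "m \<in> ?U" and min: "\<And>y. (y, m) \<in> w - Id \<Longrightarrow> y \<notin> ?U"
    by (rule wfE_min[OF wf_w]) blast+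
  have "(m, u) \<in> w" if u: "u \<in> ?U" for u
  proof -
    have "(u, m) \<notin> w - Id" using min u by blast
    then show ?thesis using w_total[of m u] w_refl[of m] u m by auto
  qed
  then have "least_upper_bound w X m" using m unfolding least_upper_bound_def by blast
  then show ?thesis by (rule that)
qed

lemma least_upper_bound_cofinal:
  assumes "least_upper_bound w X a" "Y \<subseteq> X" "\<forall>x\<in>X. \<exists>y\<in>Y. (x, y) \<in> w"
  shows "least_upper_bound w Y a"
  using assms unfolding least_upper_bound_def by (meson subsetD w_trans)

lemma least_upper_bound_UN:
  assumes "\<forall>x\<in>X. least_upper_bound w (Y x) x" "least_upper_bound w X a"
  shows "least_upper_bound w (\<Union>x\<in>X. Y x) a"
proof -
  have "(y, a) \<in> w" if "x \<in> X" "y \<in> Y x" for x y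
    using assms that w_trans unfolding least_upper_bound_def by blast
  moreover have "(a, b) \<in> w"
    if b: "b \<in> Field w" "\<forall>y\<in>(\<Union>x\<in>X. Y x). (y, b) \<in> w" for b
  proof -
    have "\<forall>x\<in>X. (x, b) \<in> w" using assms(1) b unfolding least_upper_bound_def by blast
    then show ?thesis using assms(2) b(1) unfolding least_upper_bound_def by blast
  qed
  ultimately show ?thesis using assms(2) unfolding least_upper_bound_def by blast
qed

lemma inflationary_if_strict_mono_underS:
  assumes h_into: "h ` underS w \<beta> \<subseteq> underS w \<beta>"
    and h_mono: "\<forall>x\<in>underS w \<beta>. \<forall>y\<in>underS w \<beta>. w_less x y \<longrightarrow> w_less (h x) (h y)"
  shows "\<forall>x\<in>underS w \<beta>. (x, h x) \<in> w"
proof (rule ccontr)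
  let ?Q = "{x\<in>underS w \<beta>. (x, h x) \<notin> w}"
  assume "\<not> ?thesis"
  then obtain m where m: "m \<in> ?Q" and min: "\<And>y. (y, m) \<in> w - Id \<Longrightarrow> y \<notin> ?Q"
    by (metis (no_types, lifting) mem_Collect_eq wfE_min[OF wf_w])
  have hm: "h m \<in> underS w \<beta>" using m h_into by blast
  have mF: "m \<in> Field w" "h m \<in> Field w" using m hm underS_subset_Field by blast+
  have "(m, h m) \<notin> w" using m by blast
  then have "w_less (h m) m" using w_total[OF mF] w_refl[OF mF(1)] by auto
  then have "w_less (h (h m)) (h m)" using h_mono m hm by blast
  then have "h m \<in> ?Q" using hm w_antisym by blast
  then show False using min \<open>w_less (h m) m\<close> by blast
qed

lemma no_strict_mono_into_smaller_segment:
  assumes "w_less \<alpha> \<beta>"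
    and h_into: "h ` underS w \<beta> \<subseteq> underS w \<alpha>"
    and h_mono: "\<forall>x\<in>underS w \<beta>. \<forall>y\<in>underS w \<beta>. w_less x y \<longrightarrow> w_less (h x) (h y)"
  shows False
proof -
  have "underS w \<alpha> \<subseteq> underS w \<beta>" using assms(1) w_less_le_trans unfolding underS_def by blast
  then have "h ` underS w \<beta> \<subseteq> underS w \<beta>" using h_into by blast
  then have "\<forall>x\<in>underS w \<beta>. (x, h x) \<in> w" using inflationary_if_strict_mono_underS h_mono by blast
  moreover have \<alpha>: "\<alpha> \<in> underS w \<beta>" using assms(1) by (simp add: underS_def)
  ultimately have "(\<alpha>, h \<alpha>) \<in> w" by blast
  moreover have "w_less (h \<alpha>) \<alpha>" using h_into \<alpha> by (auto simp: underS_def)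
  ultimately show False using w_antisym by blast
qed

section \<open>Clubs and limit points\<close>

lemma club_Field: "club w (Field w)"
  unfolding club_def rel_closed_def unbounded_def using w_refl by blast

lemma club_above:
  assumes C: "club w C" and \<beta>: "\<beta> \<in> Field w"
  shows "club w {a\<in>C. w_less \<beta> a}"
  unfolding club_def rel_closed_def unbounded_def
proof (intro conjI allI impI ballI)
  show "{a\<in>C. w_less \<beta> a} \<subseteq> Field w" using C unfolding club_def rel_closed_def by blast
next
  fix X a assume X: "X \<subseteq> {a\<in>C. w_less \<beta> a} \<and> X \<noteq> {} \<and> a \<in> Field w \<and> least_upper_bound w X a"
  then obtain x where "x \<in> X" by blast
  then have "w_less \<beta> x" "(x, a) \<in> w" using X unfolding least_upper_bound_def by blast+
  then have "w_less \<beta> a" by (rule w_less_le_trans)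
  moreover have "a \<in> C" using C X unfolding club_def rel_closed_def by blast
  ultimately show "a \<in> {a\<in>C. w_less \<beta> a}" by blast
next
  fix a assume "a \<in> Field w"
  then obtain b where b: "b \<in> Field w" "w_less a b" "w_less \<beta> b"
    using countable_strict_upper_bound[of "{a, \<beta>}"] \<beta> by auto
  then obtain c where "c \<in> C" "(b, c) \<in> w" using C unfolding club_def unbounded_def by blast
  then show "\<exists>c\<in>{a\<in>C. w_less \<beta> a}. (a, c) \<in> w" using b w_less_le_trans by blast
qed

lemma stationary_unbounded:
  assumes "stationary w S" "\<beta> \<in> Field w"
  shows "\<exists>\<alpha>\<in>S. w_less \<beta> \<alpha>"
  using assms(1) club_above[OF club_Field assms(2)] unfolding stationary_def by blast

lemma stationary_uncountable: "stationary w S \<Longrightarrow> uncountable S"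
  using uncountable_if_unbounded stationary_unbounded by (simp add: stationary_def)

definition sup_points :: "'i set \<Rightarrow> 'i set" where
  "sup_points C = {a. \<exists>X. X \<subseteq> C \<and> X \<noteq> {} \<and> least_upper_bound w X a}"

lemma sup_points_subset_Field: "sup_points C \<subseteq> Field w"
  unfolding sup_points_def least_upper_bound_def by blast

lemma sup_points_closed:
  assumes "X \<subseteq> sup_points C" "X \<noteq> {}" "least_upper_bound w X a"
  shows "a \<in> sup_points C"
proof -
  have "\<forall>x\<in>X. \<exists>Y. Y \<subseteq> C \<and> Y \<noteq> {} \<and> least_upper_bound w Y x"
    using assms(1) unfolding sup_points_def by blast
  then obtain Y where Y: "\<forall>x\<in>X. Y x \<subseteq> C \<and> Y x \<noteq> {} \<and> least_upper_bound w (Y x) x"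
    by (rule bchoice[elim_format]) blast
  then have "least_upper_bound w (\<Union>x\<in>X. Y x) a"
    using assms(3) by (intro least_upper_bound_UN) auto
  moreover have "(\<Union>x\<in>X. Y x) \<subseteq> C" "(\<Union>x\<in>X. Y x) \<noteq> {}" using Y assms(2) by auto
  ultimately show ?thesis unfolding sup_points_def by blast
qed

lemma interleaving_sequence:
  fixes C :: "nat \<Rightarrow> 'i set"
  assumes C: "\<And>n. uncountable (C n)" "\<And>n. C n \<subseteq> Field w" and c: "c \<in> Field w"
  obtains s where "s 0 = c" "\<And>k. s (Suc k) \<in> C (fst (prod_decode k)) \<and> w_less (s k) (s (Suc k))"
proof -
  have next_exists: "\<exists>d. d \<in> C n \<and> w_less b d" if "b \<in> Field w" for n b
  proof -
    have "uncountable {d\<in>C n. w_less b d}" using uncountable_above[OF C(1) C(2) that] .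
    then have "{d\<in>C n. w_less b d} \<noteq> {}" by (metis countable_empty)
    then show ?thesis by blast
  qed
  define next_pt where "next_pt n b = (SOME d. d \<in> C n \<and> w_less b d)" for n b
  have next_pt: "next_pt n b \<in> C n \<and> w_less b (next_pt n b)" if "b \<in> Field w" for n b
    unfolding next_pt_def using next_exists[OF that] by (rule someI_ex)
  define s where "s = rec_nat c (\<lambda>k b. next_pt (fst (prod_decode k)) b)"
  have "s k \<in> Field w" for k
    by (induction k) (use c C(2) next_pt in \<open>auto simp: s_def\<close>)
  then show ?thesis using next_pt that[of s] by (simp add: s_def)
qed

text \<open>The sequence meets each C n cofinally, as fst \<circ> prod_decode takes the value n at all
  indices prod_encode (n, m); hence its supremum is a limit point of every C n.\<close>
lemma unbounded_INT_sup_points: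
  fixes C :: "nat \<Rightarrow> 'i set"
  assumes C: "\<And>n. uncountable (C n)" "\<And>n. C n \<subseteq> Field w" and a: "a \<in> Field w"
  shows "\<exists>b\<in>(\<Inter>n. sup_points (C n)). (a, b) \<in> w"
proof -
  obtain s where s0: "s 0 = a" and s_step: "\<And>k. s (Suc k) \<in> C (fst (prod_decode k)) \<and> w_less (s k) (s (Suc k))"
    using interleaving_sequence[of C, OF C a] by blast
  have "s k \<in> Field w" for k
    using a s_step C(2) s0 by (cases k) auto
  then have sF: "range s \<subseteq> Field w" by blast
  have mono: "(s m, s k) \<in> w" if "m \<le> k" for m k
    using that
  proof (induction k rule: dec_induct)
    case base then show ?case using sF w_refl by blast
  next
    case (step k) then show ?case using s_step w_trans by blast
  qed
  have "countable (range s)" by simp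
  then obtain b where b: "least_upper_bound w (range s) b" using countable_has_lub[OF sF] by blast
  have "b \<in> sup_points (C n)" for n
  proof -
    let ?Y = "(\<lambda>k. s (Suc k)) ` {k. fst (prod_decode k) = n}"
    have in_Y: "s (Suc (prod_encode (n, m))) \<in> ?Y" for m by (intro imageI) simp
    have "least_upper_bound w ?Y b"
    proof (rule least_upper_bound_cofinal[OF b])
      show "\<forall>x\<in>range s. \<exists>y\<in>?Y. (x, y) \<in> w"
      proof
        fix x assume "x \<in> range s"
        then obtain m where "x = s m" by blast
        moreover have "m \<le> Suc (prod_encode (n, m))" using le_prod_encode_2[of m n] by simp
        ultimately have "(x, s (Suc (prod_encode (n, m)))) \<in> w" using mono by blast
        then show "\<exists>y\<in>?Y. (x, y) \<in> w" using in_Y by blast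
      qed
    qed blast
    moreover have "?Y \<subseteq> C n" using s_step by auto
    moreover have "?Y \<noteq> {}" using in_Y by blast
    ultimately show ?thesis unfolding sup_points_def by blast
  qed
  moreover have "(a, b) \<in> w" using b s0 unfolding least_upper_bound_def by (metis rangeI)
  ultimately show ?thesis by blast
qed

lemma club_INT_sup_points:
  fixes C :: "nat \<Rightarrow> 'i set"
  assumes "\<And>n. uncountable (C n)" "\<And>n. C n \<subseteq> Field w"
  shows "club w (\<Inter>n. sup_points (C n))"
  unfolding club_def rel_closed_def unbounded_def
proof (intro conjI allI impI ballI)
  show "(\<Inter>n. sup_points (C n)) \<subseteq> Field w" using sup_points_subset_Field by blast
next
  fix X a assume "X \<subseteq> (\<Inter>n. sup_points (C n)) \<and> X \<noteq> {} \<and> a \<in> Field w \<and> least_upper_bound w X a"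
  then show "a \<in> (\<Inter>n. sup_points (C n))" using sup_points_closed by (meson INT_I le_INF_iff)
qed (rule unbounded_INT_sup_points[of C, OF assms])

text \<open>S meets the club of common limit points of the C n above any bound, and a limit point
  of C n lying in S belongs to C n.\<close>
lemma uncountable_INT_rel_closed:
  fixes C :: "nat \<Rightarrow> 'i set"
  assumes S: "stationary w S" and C: "\<And>n. C n \<subseteq> S" "\<And>n. rel_closed w S (C n)" "\<And>n. uncountable (C n)"
  shows "uncountable (\<Inter>n. C n)"
proof (rule uncountable_if_unbounded)
  have CF: "C n \<subseteq> Field w" for n using C(1) S unfolding stationary_def by blast
  then show "(\<Inter>n. C n) \<subseteq> Field w" by blast
  show "\<forall>\<beta>\<in>Field w. \<exists>\<alpha>\<in>(\<Inter>n. C n). w_less \<beta> \<alpha>"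
  proof
    fix \<beta> assume "\<beta> \<in> Field w"
    with club_above[OF club_INT_sup_points[of C, OF C(3) CF]] obtain a
      where "a \<in> S" "a \<in> (\<Inter>n. sup_points (C n))" "w_less \<beta> a"
      using S unfolding stationary_def by blast
    then show "\<exists>\<alpha>\<in>(\<Inter>n. C n). w_less \<beta> \<alpha>"
      using C(2) unfolding rel_closed_def sup_points_def by blast
  qed
qed

end

section \<open>Levels and heights in an Aronszajn tree\<close>

locale aronszajn_tree = omega1 w for w :: "'i rel" +
  fixes T :: "'a set" and lt :: "'a \<Rightarrow> 'a \<Rightarrow> bool"
  assumes aronszajn: "aronszajn w T lt"
begin

abbreviation tree_le :: "'a \<Rightarrow> 'a \<Rightarrow> bool" where
  "tree_le s t \<equiv> s = t \<or> lt s t"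

abbreviation comparable :: "'a \<Rightarrow> 'a \<Rightarrow> bool" where
  "comparable s t \<equiv> lt s t \<or> s = t \<or> lt t s"

definition preds :: "'a \<Rightarrow> 'a set" where
  "preds t = {s\<in>T. lt s t}"

definition level_iso :: "('a \<Rightarrow> 'i) \<Rightarrow> 'a \<Rightarrow> 'i \<Rightarrow> bool" where
  "level_iso f t \<alpha> \<longleftrightarrow> bij_betw f (preds t) (underS w \<alpha>) \<and>
     (\<forall>x\<in>preds t. \<forall>y\<in>preds t. lt x y \<longleftrightarrow> w_less (f x) (f y))"

lemma mem_level_iff: "t \<in> level w T lt \<alpha> \<longleftrightarrow> t \<in> T \<and> (\<exists>f. level_iso f t \<alpha>)"
  unfolding level_def level_iso_def preds_def by blast

lemma is_tree: "is_tree T lt" and omega1_tree: "omega1_tree w T lt"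
  using aronszajn by (auto simp: aronszajn_def omega1_tree_def)

lemma lt_irrefl: "t \<in> T \<Longrightarrow> \<not> lt t t"
  using is_tree unfolding is_tree_def by blast

lemma lt_trans: "x \<in> T \<Longrightarrow> y \<in> T \<Longrightarrow> z \<in> T \<Longrightarrow> lt x y \<Longrightarrow> lt y z \<Longrightarrow> lt x z"
  using is_tree unfolding is_tree_def by blast

lemma comparable_if_below:
  assumes "x \<in> T" "y \<in> T" "z \<in> T" "tree_le x z" "tree_le y z"
  shows "comparable x y"
proof -
  have "\<forall>x\<in>T. \<forall>y\<in>T. lt x z \<and> lt y z \<longrightarrow> comparable x y"
    using is_tree assms(3) unfolding is_tree_def by blast
  then show ?thesis using assms by blast
qed

lemma incomparable_above:
  assumes T: "a \<in> T" "b \<in> T" "x \<in> T" "y \<in> T"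
    and "\<not> comparable a b" "tree_le a x" "tree_le b y"
  shows "\<not> comparable x y"
proof
  assume "comparable x y"
  then have "tree_le a y \<or> tree_le b x" using assms lt_trans by blast
  then show False
  proof
    assume "tree_le a y"
    then show False using comparable_if_below[OF T(1,2,4)] assms(5,7) by blast
  next
    assume "tree_le b x"
    then show False using comparable_if_below[OF T(1,2,3)] assms(5,6) by blast
  qed
qed

lemma level_subset: "level w T lt \<alpha> \<subseteq> T"
  unfolding level_def by blast

lemma T_eq_levels: "T = (\<Union>\<alpha>\<in>Field w. level w T lt \<alpha>)"
  using omega1_tree by (simp add: omega1_tree_def)

lemma level_nonempty: "\<alpha> \<in> Field w \<Longrightarrow> level w T lt \<alpha> \<noteq> {}"
  using omega1_tree by (simp add: omega1_tree_def)

lemma countable_level: "\<alpha> \<in> Field w \<Longrightarrow> countable (level w T lt \<alpha>)"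
  using omega1_tree by (simp add: omega1_tree_def)

text \<open>Otherwise the predecessors of t would be ordered like two distinct initial segments, and
  composing the isomorphisms would embed the longer segment into the shorter one.\<close>
lemma level_unique:
  assumes "t \<in> level w T lt \<alpha>" "t \<in> level w T lt \<beta>" "\<alpha> \<in> Field w" "\<beta> \<in> Field w"
  shows "\<alpha> = \<beta>"
proof -
  have "\<not> w_less \<alpha> \<beta>" if "level_iso f t \<alpha>" "level_iso g t \<beta>" for f g \<alpha> \<beta>
  proof
    assume less: "w_less \<alpha> \<beta>"
    let ?h = "\<lambda>x. f (inv_into (preds t) g x)"
    have g: "bij_betw g (preds t) (underS w \<beta>)" and f: "bij_betw f (preds t) (underS w \<alpha>)"
      using that unfolding level_iso_def by auto
    have inv: "inv_into (preds t) g x \<in> preds t \<and> g (inv_into (preds t) g x) = x" if "x \<in> underS w \<beta>" for x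
      using g that by (metis bij_betw_imp_surj_on f_inv_into_f inv_into_into)
    have "?h ` underS w \<beta> \<subseteq> underS w \<alpha>"
      using inv f by (auto dest: bij_betw_imp_surj_on)
    moreover have "\<forall>x\<in>underS w \<beta>. \<forall>y\<in>underS w \<beta>. w_less x y \<longrightarrow> w_less (?h x) (?h y)"
    proof (intro ballI impI)
      fix x y assume xy: "x \<in> underS w \<beta>" "y \<in> underS w \<beta>" "w_less x y"
      have "lt (inv_into (preds t) g x) (inv_into (preds t) g y)"
        using that(2) inv[OF xy(1)] inv[OF xy(2)] xy(3) unfolding level_iso_def by metis
      then show "w_less (?h x) (?h y)"
        using that(1) inv[OF xy(1)] inv[OF xy(2)] unfolding level_iso_def by blast
    qed
    ultimately show False using no_strict_mono_into_smaller_segment[OF less] by blast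
  qed
  then show ?thesis using assms mem_level_iff w_total by metis
qed

lemma pred_in_level:
  assumes f: "level_iso f t \<gamma>" and t: "t \<in> T" and \<beta>: "\<beta> \<in> underS w \<gamma>"
  defines "p \<equiv> inv_into (preds t) f \<beta>"
  shows "p \<in> preds t" "f p = \<beta>" "p \<in> level w T lt \<beta>"
proof -
  have fb: "bij_betw f (preds t) (underS w \<gamma>)" and fi: "\<forall>x\<in>preds t. \<forall>y\<in>preds t. lt x y \<longleftrightarrow> w_less (f x) (f y)"
    using f unfolding level_iso_def by auto
  show p: "p \<in> preds t" "f p = \<beta>" unfolding p_def using fb \<beta>
    by (metis bij_betw_imp_surj_on inv_into_into, metis bij_betw_imp_surj_on f_inv_into_f)
  have pT: "p \<in> T" "lt p t" using p by (auto simp: preds_def)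
  have preds_p: "preds p = {s\<in>preds t. lt s p}"
    unfolding preds_def using lt_trans[of _ p t] pT t by blast
  have "f ` preds p = underS w \<beta>"
  proof
    show "f ` preds p \<subseteq> underS w \<beta>" using preds_p fi p by (auto simp: underS_def)
  next
    show "underS w \<beta> \<subseteq> f ` preds p"
    proof
      fix x assume x: "x \<in> underS w \<beta>"
      then have "x \<in> underS w \<gamma>" using \<beta> w_less_le_trans unfolding underS_def by blast
      then obtain s where s: "s \<in> preds t" "f s = x" using bij_betw_imp_surj_on[OF fb] by force
      then have "lt s p" using fi p x by (simp add: underS_def)
      then show "x \<in> f ` preds p" using s preds_p by blast
    qed
  qed
  moreover have "inj_on f (preds p)"
    using inj_on_subset[OF bij_betw_imp_inj_on[OF fb]] preds_p by blast
  ultimately have "level_iso f p \<beta>" using fi preds_p unfolding level_iso_def bij_betw_def by blast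
  then show "p \<in> level w T lt \<beta>" using pT mem_level_iff by blast
qed

definition height :: "'a \<Rightarrow> 'i" where
  "height t = (THE \<alpha>. \<alpha> \<in> Field w \<and> t \<in> level w T lt \<alpha>)"

lemma height_eq: "t \<in> level w T lt \<alpha> \<Longrightarrow> \<alpha> \<in> Field w \<Longrightarrow> height t = \<alpha>"
  unfolding height_def using level_unique by blast

lemma height_in_level: "t \<in> T \<Longrightarrow> height t \<in> Field w \<and> t \<in> level w T lt (height t)"
  using T_eq_levels height_eq by blast

lemma height_less:
  assumes "s \<in> T" "t \<in> T" "lt s t"
  shows "w_less (height s) (height t)"
proof -
  obtain f where f: "level_iso f t (height t)" using height_in_level[OF assms(2)] mem_level_iff by blast
  have s: "s \<in> preds t" using assms by (simp add: preds_def)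
  then have fs: "f s \<in> underS w (height t)" using f unfolding level_iso_def by (metis bij_betw_imp_surj_on imageI)
  have "inv_into (preds t) f (f s) = s"
    using f s unfolding level_iso_def by (meson bij_betw_imp_inj_on inv_into_f_f)
  then have "s \<in> level w T lt (f s)" using pred_in_level(3)[OF f assms(2) fs] by simp
  then have "height s = f s" using height_eq underS_subset_Field fs by blast
  then show ?thesis using fs by (simp add: underS_def)
qed

lemma lt_if_height_less:
  assumes "x \<in> T" "y \<in> T" "comparable x y" "w_less (height x) (height y)"
  shows "lt x y"
  using assms height_less w_antisym by blast

lemma pred_at_height:
  assumes "t \<in> T" "w_less \<beta> (height t)"
  obtains p where "p \<in> T" "lt p t" "height p = \<beta>"
proof -
  obtain f where f: "level_iso f t (height t)" using height_in_level[OF assms(1)] mem_level_iff by blast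
  let ?p = "inv_into (preds t) f \<beta>"
  have "\<beta> \<in> underS w (height t)" using assms by (simp add: underS_def)
  then have p: "?p \<in> preds t" "?p \<in> level w T lt \<beta>" using pred_in_level(1,3)[OF f assms(1)] by blast+
  have "height ?p = \<beta>" using height_eq[OF p(2)] FieldI1[of \<beta> "height t" w] assms(2) by blast
  then show ?thesis using that p(1) unfolding preds_def by blast
qed

lemma countable_chain:
  assumes "Ch \<subseteq> T" "\<forall>x\<in>Ch. \<forall>y\<in>Ch. comparable x y"
  shows "countable Ch"
proof -
  define B where "B = {s\<in>T. \<exists>c\<in>Ch. tree_le s c}"
  have "comparable x y" if xy: "x \<in> B" "y \<in> B" for x y
  proof -
    obtain c d where cd: "c \<in> Ch" "d \<in> Ch" "tree_le x c" "tree_le y d" "x \<in> T" "y \<in> T"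
      using xy unfolding B_def by blast
    then have "c \<in> T" "d \<in> T" "comparable c d" using assms by auto
    then have "tree_le x d \<or> tree_le y c" using cd lt_trans by blast
    then show ?thesis
    proof
      assume "tree_le x d"
      then show ?thesis using comparable_if_below[OF cd(5,6) \<open>d \<in> T\<close>] cd(4) by blast
    next
      assume "tree_le y c"
      then show ?thesis using comparable_if_below[OF cd(5,6) \<open>c \<in> T\<close>] cd(3) by blast
    qed
  qed
  moreover have "s \<in> B" if x: "x \<in> B" and s: "s \<in> T" "lt s x" for x s
  proof -
    obtain c where "c \<in> Ch" "tree_le x c" "x \<in> T" using x unfolding B_def by blast
    then show ?thesis using s lt_trans assms(1) unfolding B_def by blast
  qed
  moreover have "B \<subseteq> T" unfolding B_def by blast
  ultimately have "branch T lt B" unfolding branch_def by blast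
  then have "countable B" using aronszajn by (simp add: aronszajn_def)
  moreover have "Ch \<subseteq> B" using assms unfolding B_def by blast
  ultimately show ?thesis using countable_subset by blast
qed

lemma countable_nodes_upto:
  assumes "\<delta> \<in> Field w"
  shows "countable {t\<in>T. (height t, \<delta>) \<in> w}"
proof -
  have "{t\<in>T. (height t, \<delta>) \<in> w} \<subseteq> (\<Union>\<alpha>\<in>underS w \<delta> \<union> {\<delta>}. level w T lt \<alpha>)"
    using height_in_level unfolding underS_def by fastforce
  moreover have "countable (\<Union>\<alpha>\<in>underS w \<delta> \<union> {\<delta>}. level w T lt \<alpha>)"
    using countable_underS[OF assms] countable_level underS_subset_Field assms by blast
  ultimately show ?thesis using countable_subset by blast
qed

section \<open>Thin sets of levels\<close>

definition selector :: "('i \<Rightarrow> 'a) \<Rightarrow> bool" where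
  "selector u \<longleftrightarrow> (\<forall>\<alpha>\<in>Field w. u \<alpha> \<in> level w T lt \<alpha>)"

definition thin :: "('i \<Rightarrow> 'a) \<Rightarrow> 'i set \<Rightarrow> bool" where
  "thin u X \<longleftrightarrow> (\<forall>t\<in>T. finite {\<alpha>\<in>X. lt (u \<alpha>) t})"

definition thin_family :: "('i \<Rightarrow> 'a) \<Rightarrow> 'i set set" where
  "thin_family u = {x. x \<subseteq> Field w \<and> countable x \<and> thin u x}"

definition cone :: "('i \<Rightarrow> 'a) \<Rightarrow> 'i set \<Rightarrow> 'a \<Rightarrow> 'i set" where
  "cone u B s = {\<alpha>\<in>B. tree_le s (u \<alpha>)}"

lemma selector_node:
  assumes "selector u" "\<alpha> \<in> Field w"
  shows "u \<alpha> \<in> T" "height (u \<alpha>) = \<alpha>"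
  using assms level_subset height_eq unfolding selector_def by blast+

lemma thin_subset:
  assumes "thin u X" "Y \<subseteq> X"
  shows "thin u Y"
  unfolding thin_def
proof
  fix t assume "t \<in> T"
  then have "finite {\<alpha>\<in>X. lt (u \<alpha>) t}" using assms(1) unfolding thin_def by blast
  moreover have "{\<alpha>\<in>Y. lt (u \<alpha>) t} \<subseteq> {\<alpha>\<in>X. lt (u \<alpha>) t}" using assms(2) by blast
  ultimately show "finite {\<alpha>\<in>Y. lt (u \<alpha>) t}" by (rule rev_finite_subset)
qed

lemma uncountable_common_pred:
  assumes u: "selector u" and \<beta>: "\<beta> \<in> Field w"
    and B: "B \<subseteq> Field w" "uncountable B" "\<forall>\<alpha>\<in>B. w_less \<beta> \<alpha>"
  obtains y where "y \<in> T" "height y = \<beta>" "uncountable {\<alpha>\<in>B. lt y (u \<alpha>)}"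
proof -
  define p where "p \<alpha> = (SOME p. p \<in> T \<and> lt p (u \<alpha>) \<and> height p = \<beta>)" for \<alpha>
  have p: "p \<alpha> \<in> T \<and> lt (p \<alpha>) (u \<alpha>) \<and> height (p \<alpha>) = \<beta>" if \<alpha>B: "\<alpha> \<in> B" for \<alpha>
  proof -
    have \<alpha>: "\<alpha> \<in> Field w" using \<alpha>B B(1) by blast
    have "w_less \<beta> (height (u \<alpha>))" using selector_node(2)[OF u \<alpha>] B(3) \<alpha>B by simp
    then obtain q where "q \<in> T" "lt q (u \<alpha>)" "height q = \<beta>"
      by (rule pred_at_height[OF selector_node(1)[OF u \<alpha>]])
    then have "\<exists>q. q \<in> T \<and> lt q (u \<alpha>) \<and> height q = \<beta>" by blast
    then show ?thesis unfolding p_def by (rule someI_ex)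
  qed
  have "p ` B \<subseteq> level w T lt \<beta>"
  proof
    fix x assume "x \<in> p ` B"
    then obtain \<alpha> where "\<alpha> \<in> B" "x = p \<alpha>" by blast
    then show "x \<in> level w T lt \<beta>" using p height_in_level by metis
  qed
  from uncountable_fiber[OF this countable_level[OF \<beta>] B(2)]
  obtain y where y: "y \<in> level w T lt \<beta>" "uncountable {\<alpha>\<in>B. p \<alpha> = y}" by blast
  have "{\<alpha>\<in>B. p \<alpha> = y} \<subseteq> {\<alpha>\<in>B. lt y (u \<alpha>)}" using p by blast
  from countable_subset[OF this] have "uncountable {\<alpha>\<in>B. lt y (u \<alpha>)}" using y(2) by blast
  moreover have "y \<in> T" "height y = \<beta>" using y(1) level_subset height_eq \<beta> by blast+
  ultimately show ?thesis using that by blast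
qed

lemma exists_uncountable_cone:
  assumes u: "selector u" and B: "B \<subseteq> Field w" "uncountable B"
  obtains s where "s \<in> T" "uncountable (cone u B s)"
proof -
  have "Field w \<noteq> {}" using uncountable_Field by auto
  then obtain \<beta> where \<beta>: "\<beta> \<in> Field w" by blast
  let ?B = "{\<alpha>\<in>B. w_less \<beta> \<alpha>}"
  have "?B \<subseteq> Field w" using B(1) by blast
  moreover have "uncountable ?B" using uncountable_above[OF B(2) B(1) \<beta>] .
  moreover have "\<forall>\<alpha>\<in>?B. w_less \<beta> \<alpha>" by blast
  ultimately obtain y where y: "y \<in> T" "uncountable {\<alpha>\<in>?B. lt y (u \<alpha>)}"
    by (rule uncountable_common_pred[OF u \<beta>])
  have "{\<alpha>\<in>?B. lt y (u \<alpha>)} \<subseteq> cone u B y" unfolding cone_def by blast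
  from countable_subset[OF this] have "uncountable (cone u B y)" using y(2) by blast
  with y(1) show ?thesis by (rule that)
qed

text \<open>Otherwise the nodes above s with uncountable cones form a chain, hence are bounded in
  height by some \<beta>; but a node of height \<beta> below uncountably many points of the cone of s
  would be such a node.\<close>
lemma uncountable_cone_splits:
  assumes u: "selector u" and B: "B \<subseteq> Field w" and s: "s \<in> T" "uncountable (cone u B s)"
  obtains a b where "a \<in> T" "b \<in> T" "tree_le s a" "tree_le s b"
    "uncountable (cone u B a)" "uncountable (cone u B b)" "\<not> comparable a b"
proof (rule ccontr)
  note split = that
  assume no_split: "\<not> thesis"
  define K where "K = {a\<in>T. tree_le s a \<and> uncountable (cone u B a)}"
  have "comparable a b" if "a \<in> K" "b \<in> K" for a b
    using that split no_split unfolding K_def by blast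
  then have "countable K" using countable_chain[of K] unfolding K_def by blast
  moreover have "height ` K \<subseteq> Field w" using height_in_level unfolding K_def by blast
  ultimately obtain \<beta> where \<beta>: "\<beta> \<in> Field w" "\<forall>x\<in>height ` K. w_less x \<beta>"
    using countable_strict_upper_bound[of "height ` K"] by blast
  let ?B = "{\<alpha>\<in>cone u B s. w_less \<beta> \<alpha>}"
  have cone_F: "cone u B s \<subseteq> Field w" using B unfolding cone_def by blast
  then have "?B \<subseteq> Field w" by blast
  moreover have "uncountable ?B" using uncountable_above[OF s(2) cone_F \<beta>(1)] .
  moreover have "\<forall>\<alpha>\<in>?B. w_less \<beta> \<alpha>" by blast
  ultimately obtain y where y: "y \<in> T" "height y = \<beta>" "uncountable {\<alpha>\<in>?B. lt y (u \<alpha>)}"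
    by (rule uncountable_common_pred[OF u \<beta>(1)])
  then have "{\<alpha>\<in>?B. lt y (u \<alpha>)} \<noteq> {}" by (metis countable_empty)
  then obtain \<alpha> where \<alpha>: "\<alpha> \<in> ?B" "lt y (u \<alpha>)" by blast
  have "\<alpha> \<in> Field w" using \<alpha> cone_F by blast
  then have u\<alpha>: "u \<alpha> \<in> T" "height (u \<alpha>) = \<alpha>" using selector_node[OF u] by simp_all
  have "s \<in> K" using s unfolding K_def by blast
  then have hs: "w_less (height s) \<beta>" using \<beta>(2) by blast
  then have "s \<noteq> u \<alpha>" using u\<alpha>(2) \<alpha>(1) w_antisym by auto
  then have "lt s (u \<alpha>)" using \<alpha>(1) unfolding cone_def by blast
  then have "comparable s y" using comparable_if_below[OF s(1) y(1) u\<alpha>(1)] \<alpha>(2) by blast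
  then have "lt s y" using lt_if_height_less[OF s(1) y(1)] hs y(2) by blast
  moreover have "uncountable (cone u B y)"
  proof -
    have "{\<alpha>\<in>?B. lt y (u \<alpha>)} \<subseteq> cone u B y" by (auto simp: cone_def)
    from countable_subset[OF this] show ?thesis using y(3) by blast
  qed
  ultimately have "y \<in> K" using y(1) unfolding K_def by blast
  then show False using \<beta>(2) y(2) by blast
qed

lemma infinite_antichain_of_cones:
  assumes u: "selector u" and B: "B \<subseteq> Field w" "uncountable B"
  obtains a :: "nat \<Rightarrow> 'a" where "\<And>k. a k \<in> T" "\<And>k. uncountable (cone u B (a k))"
    "\<And>i j. i \<noteq> j \<Longrightarrow> \<not> comparable (a i) (a j)"
proof -
  define good where "good x \<longleftrightarrow> x \<in> T \<and> uncountable (cone u B x)" for x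
  define splits where "splits x p \<longleftrightarrow> good (fst p) \<and> good (snd p) \<and>
      tree_le x (fst p) \<and> tree_le x (snd p) \<and> \<not> comparable (fst p) (snd p)" for x p
  define split where "split x = (SOME p. splits x p)" for x
  have split: "splits x (split x)" if "good x" for x
  proof -
    have "x \<in> T" "uncountable (cone u B x)" using that unfolding good_def by blast+
    then obtain a b where "a \<in> T" "b \<in> T" "tree_le x a" "tree_le x b"
      "uncountable (cone u B a)" "uncountable (cone u B b)" "\<not> comparable a b"
      by (rule uncountable_cone_splits[OF u B(1)])
    then have "splits x (a, b)" unfolding splits_def good_def by simp
    then show ?thesis unfolding split_def by (rule someI)
  qed
  obtain s where "s \<in> T" "uncountable (cone u B s)" by (rule exists_uncountable_cone[OF u B])
  then have s: "good s" unfolding good_def by blast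
  define b where "b = rec_nat s (\<lambda>_ x. snd (split x))"
  define a where "a k = fst (split (b k))" for k
  have good_b: "good (b k)" for k
    by (induction k) (use s split in \<open>auto simp: b_def splits_def\<close>)
  have step: "splits (b k) (a k, b (Suc k))" for k
    using split[OF good_b] by (simp add: a_def b_def)
  have bT: "b k \<in> T" for k using good_b unfolding good_def by blast
  have aT: "a k \<in> T" for k using step[of k] unfolding splits_def good_def by auto
  have b_mono: "tree_le (b i) (b j)" if "i \<le> j" for i j
    using that
  proof (induction j rule: dec_induct)
    case (step k) then show ?case using \<open>\<And>k. splits (b k) (a k, b (Suc k))\<close>[of k] lt_trans[OF bT bT bT]
      unfolding splits_def by auto
  qed simp
  have anti: "\<not> comparable (a i) (a j)" if "i < j" for i j
  proof -
    have "tree_le (b (Suc i)) (b j)" using b_mono that by simp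
    moreover have "tree_le (b j) (a j)" using step[of j] unfolding splits_def by simp
    ultimately have "tree_le (b (Suc i)) (a j)" using lt_trans[OF bT bT aT] by auto
    moreover have "\<not> comparable (a i) (b (Suc i))" using step[of i] unfolding splits_def by simp
    ultimately show ?thesis using incomparable_above[OF aT[of i] bT[of "Suc i"] aT[of i] aT[of j]] by blast
  qed
  have "\<not> comparable (a i) (a j)" if "i \<noteq> j" for i j
    using anti[of i j] anti[of j i] that by (cases "i < j") auto
  moreover have "uncountable (cone u B (a k))" for k using step[of k] unfolding splits_def good_def by simp
  ultimately show ?thesis using that aT by blast
qed

text \<open>Choosing one level in the cone of each node of an infinite antichain gives selector
  values forming an antichain, so each node lies above at most one of them.\<close>
lemma exists_infinite_thin_subset:
  assumes u: "selector u" and B: "B \<subseteq> Field w" "uncountable B"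
  obtains x where "x \<subseteq> B" "infinite x" "countable x" "thin u x"
proof -
  obtain a :: "nat \<Rightarrow> 'a" where aT: "\<And>k. a k \<in> T" and a_cone: "\<And>k. uncountable (cone u B (a k))"
    and a_anti: "\<And>i j. i \<noteq> j \<Longrightarrow> \<not> comparable (a i) (a j)"
    using infinite_antichain_of_cones[OF u B] by blast
  have "\<forall>k. \<exists>\<alpha>. \<alpha> \<in> cone u B (a k)" using a_cone by (metis countable_empty ex_in_conv)
  then obtain pick where "\<forall>k. pick k \<in> cone u B (a k)" by (rule choice[elim_format]) blast
  then have pick_B: "pick k \<in> B" and le: "tree_le (a k) (u (pick k))" for k unfolding cone_def by blast+
  have uT: "u (pick k) \<in> T" for k using selector_node(1)[OF u] pick_B B(1) by blast
  have u_anti: "\<not> comparable (u (pick i)) (u (pick j))" if "i \<noteq> j" for i j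
    using incomparable_above[OF aT aT uT uT a_anti[OF that] le le] .
  then have "inj pick" by (metis injI)
  then have "infinite (range pick)" using range_inj_infinite by blast
  moreover have "thin u (range pick)"
    unfolding thin_def
  proof
    fix t assume t: "t \<in> T"
    let ?S = "{\<alpha>\<in>range pick. lt (u \<alpha>) t}"
    have eq: "\<beta> = \<gamma>" if \<beta>\<gamma>: "\<beta> \<in> ?S" "\<gamma> \<in> ?S" for \<beta> \<gamma>
    proof -
      obtain i j where ij: "\<beta> = pick i" "\<gamma> = pick j" using \<beta>\<gamma> by blast
      then have "lt (u (pick i)) t" "lt (u (pick j)) t" using \<beta>\<gamma> by auto
      then have "comparable (u (pick i)) (u (pick j))" using comparable_if_below[OF uT[of i] uT[of j] t] by blast
      then have "i = j" using u_anti by blast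
      then show ?thesis using ij by simp
    qed
    show "finite ?S"
    proof (cases "?S = {}")
      case False
      then obtain \<gamma> where "\<gamma> \<in> ?S" by blast
      then have "?S \<subseteq> {\<gamma>}" using eq by blast
      then show ?thesis by (rule finite_subset) simp
    qed (simp only: finite.emptyI)
  qed
  moreover have "range pick \<subseteq> B" using pick_B by blast
  ultimately show ?thesis using that by blast
qed

lemma thin_if_thin_upto:
  assumes u: "selector u" and \<delta>: "\<delta> \<in> Field w"
    and y: "y \<subseteq> Field w" "\<forall>\<alpha>\<in>y. w_less \<alpha> \<delta>"
    and low: "\<forall>t\<in>{t\<in>T. (height t, \<delta>) \<in> w}. finite {\<alpha>\<in>y. lt (u \<alpha>) t}"
  shows "thin u y"
  unfolding thin_def
proof
  fix t assume t: "t \<in> T"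
  show "finite {\<alpha>\<in>y. lt (u \<alpha>) t}"
  proof (cases "(height t, \<delta>) \<in> w")
    case True
    then show ?thesis using low t by blast
  next
    case False
    then have "w_less \<delta> (height t)"
      using w_total[OF _ \<delta>, of "height t"] height_in_level[OF t] w_refl[OF \<delta>] by auto
    then obtain p where p: "p \<in> T" "lt p t" "height p = \<delta>" by (rule pred_at_height[OF t])
    have "{\<alpha>\<in>y. lt (u \<alpha>) t} \<subseteq> {\<alpha>\<in>y. lt (u \<alpha>) p}"
    proof
      fix \<alpha> assume \<alpha>: "\<alpha> \<in> {\<alpha>\<in>y. lt (u \<alpha>) t}"
      then have "\<alpha> \<in> Field w" using y(1) by blast
      then have u\<alpha>: "u \<alpha> \<in> T" "height (u \<alpha>) = \<alpha>" using selector_node[OF u] by simp_all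
      have "comparable (u \<alpha>) p" using comparable_if_below[OF u\<alpha>(1) p(1) t] \<alpha> p(2) by blast
      moreover have "w_less (height (u \<alpha>)) (height p)" using u\<alpha>(2) p(3) y(2) \<alpha> by simp
      ultimately have "lt (u \<alpha>) p" using lt_if_height_less[OF u\<alpha>(1) p(1)] by blast
      then show "\<alpha> \<in> {\<alpha>\<in>y. lt (u \<alpha>) p}" using \<alpha> by blast
    qed
    moreover have "finite {\<alpha>\<in>y. lt (u \<alpha>) p}" using low p(1,3) w_refl[OF \<delta>] by simp
    ultimately show ?thesis by (rule finite_subset)
  qed
qed

text \<open>Bound the given sets below some \<delta>; a thin almost upper bound then only has to be
  arranged for the countably many nodes of height at most \<delta>, since above them thinness is
  inherited from the predecessor at height \<delta>.\<close>
lemma thin_family_sigma_directed: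
  assumes u: "selector u"
  shows "sigma_directed w (thin_family u)"
  unfolding sigma_directed_def
proof (intro conjI allI impI)
  show "\<forall>x\<in>thin_family u. x \<subseteq> Field w \<and> countable x" unfolding thin_family_def by blast
next
  fix G assume G: "G \<subseteq> thin_family u \<and> countable G"
  have GF: "\<Union>G \<subseteq> Field w" using G unfolding thin_family_def by blast
  have Gc: "countable (\<Union>G)" using countable_UN[of G "\<lambda>x. x"] G unfolding thin_family_def by auto
  obtain \<delta> where \<delta>: "\<delta> \<in> Field w" "\<forall>\<alpha>\<in>\<Union>G. w_less \<alpha> \<delta>"
    using countable_strict_upper_bound[OF GF Gc] by blast
  let ?L = "{t\<in>T. (height t, \<delta>) \<in> w}"
  have "\<forall>x\<in>G. \<forall>t\<in>?L. finite {\<alpha>\<in>x. lt (u \<alpha>) t}" using G unfolding thin_family_def thin_def by blast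
  with G have "\<exists>y\<subseteq>\<Union>G. (\<forall>x\<in>G. finite (x - y)) \<and> (\<forall>t\<in>?L. finite {\<alpha>\<in>y. lt (u \<alpha>) t})"
    by (intro diagonal_almost_upper_bound countable_nodes_upto[OF \<delta>(1)]) blast+
  then obtain y where y: "y \<subseteq> \<Union>G" "\<forall>x\<in>G. finite (x - y)" "\<forall>t\<in>?L. finite {\<alpha>\<in>y. lt (u \<alpha>) t}"
    by (elim exE conjE) iprover
  have yF: "y \<subseteq> Field w" using y(1) GF by blast
  moreover have "\<forall>\<alpha>\<in>y. w_less \<alpha> \<delta>" using y(1) \<delta>(2) by blast
  ultimately have "thin u y" using y(3) by (rule thin_if_thin_upto[OF u \<delta>(1)])
  moreover have "countable y" using countable_subset[OF y(1) Gc] .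
  ultimately have "y \<in> thin_family u" using yF unfolding thin_family_def by blast
  then show "\<exists>y\<in>thin_family u. \<forall>x\<in>G. almost_subset x y" using y(2) unfolding almost_subset_def by blast
qed

lemma no_stationary_orthogonal_thin_family:
  assumes u: "selector u" and B: "stationary w B"
  shows "\<not> orthogonal B (thin_family u)"
proof
  assume orth: "orthogonal B (thin_family u)"
  have BF: "B \<subseteq> Field w" using B unfolding stationary_def by blast
  obtain x where x: "x \<subseteq> B" "infinite x" "countable x" "thin u x"
    by (rule exists_infinite_thin_subset[OF u BF stationary_uncountable[OF B]])
  then have "x \<in> thin_family u" using BF unfolding thin_family_def by blast
  then have "finite (B \<inter> x)" using orth unfolding orthogonal_def by blast
  moreover have "B \<inter> x = x" using x(1) by blast
  ultimately show False using x(2) by simp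
qed

lemma thin_if_locally_in_thin_family:
  assumes "locally_in (down (thin_family u)) C"
  shows "thin u C"
  unfolding thin_def
proof
  fix t assume t: "t \<in> T"
  show "finite {\<alpha>\<in>C. lt (u \<alpha>) t}"
  proof (rule ccontr)
    assume "infinite {\<alpha>\<in>C. lt (u \<alpha>) t}"
    then obtain f :: "nat \<Rightarrow> 'i" where f: "inj f" "range f \<subseteq> {\<alpha>\<in>C. lt (u \<alpha>) t}"
      using infinite_countable_subset by blast
    have "range f \<in> down (thin_family u)" using assms f unfolding locally_in_def by blast
    then obtain x where x: "x \<in> thin_family u" "range f \<subseteq> x" unfolding down_def by blast
    have "range f \<subseteq> {\<alpha>\<in>x. lt (u \<alpha>) t}" using f x by blast
    moreover have "finite {\<alpha>\<in>x. lt (u \<alpha>) t}" using x t unfolding thin_family_def thin_def by blast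
    ultimately have "finite (range f)" by (rule finite_subset)
    then show False using f(1) range_inj_infinite by blast
  qed
qed

text \<open>The nodes of u ` C with the same finite number of predecessors in u ` C form an antichain.\<close>
lemma special_image_if_thin:
  assumes u: "selector u" and C: "C \<subseteq> Field w" "thin u C"
  shows "special lt (u ` C)"
proof -
  let ?X = "u ` C"
  have XT: "?X \<subseteq> T" using selector_node(1)[OF u] C(1) by blast
  have fin: "finite {x\<in>?X. lt x v}" if "v \<in> T" for v
  proof -
    have "{x\<in>?X. lt x v} = u ` {\<alpha>\<in>C. lt (u \<alpha>) v}" by blast
    then show ?thesis using C(2) that unfolding thin_def by simp
  qed
  define A where "A m = {v\<in>?X. card {x\<in>?X. lt x v} = m}" for m
  have "\<not> lt a b" if "a \<in> A m" "b \<in> A m" for a b m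
  proof
    assume ab: "lt a b"
    have abT: "a \<in> T" "b \<in> T" "a \<in> ?X" using that XT unfolding A_def by auto
    have "{x\<in>?X. lt x a} \<subset> {x\<in>?X. lt x b}"
    proof
      show "{x\<in>?X. lt x a} \<subseteq> {x\<in>?X. lt x b}" using lt_trans abT ab XT by blast
      have "a \<in> {x\<in>?X. lt x b}" "a \<notin> {x\<in>?X. lt x a}" using abT ab lt_irrefl by auto
      then show "{x\<in>?X. lt x a} \<noteq> {x\<in>?X. lt x b}" by blast
    qed
    then have "card {x\<in>?X. lt x a} < card {x\<in>?X. lt x b}" using psubset_card_mono fin abT by blast
    then show False using that unfolding A_def by simp
  qed
  then have "antichain lt (A m)" for m unfolding antichain_def by blast
  moreover have "?X = \<Union>(range A)" unfolding A_def by blast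
  ultimately show ?thesis unfolding special_def by (intro exI[of _ "range A"]) auto
qed

lemma star_s_thin_subsets:
  assumes "star_s TYPE('i)"
  obtains \<A> where "max_antichain_stat w \<A>"
    "\<And>u S. selector u \<Longrightarrow> S \<in> \<A> \<Longrightarrow> \<exists>C. C \<subseteq> S \<and> uncountable C \<and> rel_closed w S C \<and> thin u C"
proof -
  obtain \<A> where \<A>: "max_antichain_stat w \<A>"
    and dichotomy: "\<forall>\<H>. sigma_directed w \<H> \<longrightarrow>
       (\<forall>S\<in>\<A>. \<exists>C. C \<subseteq> S \<and> uncountable C \<and> rel_closed w S C \<and> locally_in (down \<H>) C)
       \<or> (\<exists>B. stationary w B \<and> orthogonal B \<H>)"
    using mp[OF assms[unfolded star_s_def, THEN spec[of _ w]] conjI[OF well_order uncountable_cof]]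
    by (elim exE conjE) iprover
  have "\<exists>C. C \<subseteq> S \<and> uncountable C \<and> rel_closed w S C \<and> thin u C" if u: "selector u" and S: "S \<in> \<A>" for u S
  proof -
    have "\<forall>S\<in>\<A>. \<exists>C. C \<subseteq> S \<and> uncountable C \<and> rel_closed w S C \<and> locally_in (down (thin_family u)) C"
      using dichotomy[rule_format, OF thin_family_sigma_directed[OF u]]
        no_stationary_orthogonal_thin_family[OF u] by blast
    from bspec[OF this S] obtain C
      where C: "C \<subseteq> S \<and> uncountable C \<and> rel_closed w S C \<and> locally_in (down (thin_family u)) C"
      by blast
    then show ?thesis using thin_if_locally_in_thin_family[of u C] by blast
  qed
  with \<A> show ?thesis by (rule that)
qed

definition level_enum :: "nat \<Rightarrow> 'i \<Rightarrow> 'a" where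
  "level_enum n \<alpha> = from_nat_into (level w T lt \<alpha>) n"

lemma selector_level_enum: "selector (level_enum n)"
  unfolding selector_def level_enum_def by (intro ballI from_nat_into level_nonempty)

lemma restr_eq_UN_level_enum:
  assumes "C \<subseteq> Field w"
  shows "restr w T lt C = (\<Union>n. level_enum n ` C)"
proof
  show "restr w T lt C \<subseteq> (\<Union>n. level_enum n ` C)"
  proof
    fix v assume "v \<in> restr w T lt C"
    then obtain \<alpha> where \<alpha>: "\<alpha> \<in> C" "v \<in> level w T lt \<alpha>" unfolding restr_def by blast
    then have "\<alpha> \<in> Field w" using assms by blast
    then have "range (\<lambda>n. level_enum n \<alpha>) = level w T lt \<alpha>"
      unfolding level_enum_def by (intro range_from_nat_into level_nonempty countable_level)
    then show "v \<in> (\<Union>n. level_enum n ` C)" using \<alpha> by blast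
  qed
next
  show "(\<Union>n. level_enum n ` C) \<subseteq> restr w T lt C"
    using selector_level_enum assms unfolding selector_def restr_def by blast
qed

lemma exists_special_restr:
  assumes S: "stationary w S"
    and thin_sets: "\<And>n. \<exists>C. C \<subseteq> S \<and> uncountable C \<and> rel_closed w S C \<and> thin (level_enum n) C"
  shows "\<exists>C. C \<subseteq> S \<and> uncountable C \<and> rel_closed w S C \<and> special lt (restr w T lt C)"
proof -
  obtain Cn where Cn: "\<And>n. Cn n \<subseteq> S" "\<And>n. uncountable (Cn n)" "\<And>n. rel_closed w S (Cn n)"
    "\<And>n. thin (level_enum n) (Cn n)"
    using thin_sets by metis
  define C where "C = (\<Inter>n. Cn n)"
  have CS: "C \<subseteq> S" using Cn(1) unfolding C_def by blast
  have CF: "C \<subseteq> Field w" using CS S unfolding stationary_def by blast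
  have "thin (level_enum n) C" for n by (rule thin_subset[OF Cn(4)]) (auto simp: C_def)
  then have "special lt (level_enum n ` C)" for n by (rule special_image_if_thin[OF selector_level_enum CF])
  then have "special lt (\<Union>n. level_enum n ` C)" by (rule special_UN)
  then have "special lt (restr w T lt C)" using restr_eq_UN_level_enum[OF CF] by simp
  moreover have "uncountable C" unfolding C_def by (rule uncountable_INT_rel_closed[of S Cn, OF S Cn(1) Cn(3) Cn(2)])
  moreover have "rel_closed w S C" unfolding C_def by (rule rel_closed_INT) (rule Cn(3))
  ultimately show ?thesis using CS by blast
qed

end

theorem theorem5p2:
  fixes w :: "'i rel" and T :: "'a set" and lt :: "'a \<Rightarrow> 'a \<Rightarrow> bool"
  assumes "star_s TYPE('i)" and "star_s TYPE('a)"
    and "is_omega1 w"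
    and "aronszajn w T lt"
  shows "NS_special w T lt"
proof -
  \<comment> \<open>Only the instance of (\<star>s) at \<omega>1, i.e. for the type 'i, is needed.\<close>
  interpret aronszajn_tree w T lt
    by (intro aronszajn_tree.intro omega1.intro aronszajn_tree_axioms.intro assms(3) assms(4))
  obtain \<A> where \<A>: "max_antichain_stat w \<A>"
    and thin_sets: "\<And>u S. selector u \<Longrightarrow> S \<in> \<A> \<Longrightarrow>
      \<exists>C. C \<subseteq> S \<and> uncountable C \<and> rel_closed w S C \<and> thin u C"
    using star_s_thin_subsets[OF assms(1)] by blast
  have "\<exists>C. C \<subseteq> S \<and> uncountable C \<and> rel_closed w S C \<and> special lt (restr w T lt C)"
    if S: "S \<in> \<A>" for S
  proof (rule exists_special_restr)
    show "stationary w S" using \<A> S unfolding max_antichain_stat_def by blast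
    show "\<exists>C. C \<subseteq> S \<and> uncountable C \<and> rel_closed w S C \<and> thin (level_enum n) C" for n
      using thin_sets[OF selector_level_enum S] .
  qed
  then show ?thesis using \<A> unfolding NS_special_def by blast
qed

end
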